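(* Let $\Gamma$ be a Deza graph with parameters $(n,k,k-1,a)$, $k>1$, $\beta=1$. Let $x,y$ be $NA$-vertices with $C(x)\ne C(y)$. Then (1) $x'$ and $y$ are adjacent if and only if $x$ and $y'$ are adjacent; (2) $x$ and $y$ are adjacent if and only if $x'$ and $y'$ are adjacent.
   Context: A Deza graph with parameters $(n,k,b,a)$, $a\le b$, is a $k$-regular graph on $n$ vertices in which any two distinct vertices have $a$ or $b$ common neighbours; $\beta$ is the number of vertices $u\ne v$ with exactly $b$ common neighbours with a given vertex $v$. Since $\beta=1$, for each vertex $x$ let $x_b$ denote the unique vertex having $b=k-1$ common neighbours with $x$. A vertex $x$ is an $A$-vertex if $x$ is adjacent to $x_b$, and an $NA$-vertex otherwise. For an $NA$-vertex $x$, $x'$ denotes the unique neighbour of $x$ not adjacent to $x_b$, $x_b'=(x')_b=(x_b)'$, and $C(x)=\{x,x',x_b,x_b'\}$. *)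

theory Defs
  imports Main
begin

text \<open>A simple graph is given by a vertex set V and an adjacency relation E
 (only its restriction to V matters).\<close>

definition common_nbrs :: "'a set \<Rightarrow> ('a \<Rightarrow> 'a \<Rightarrow> bool) \<Rightarrow> 'a \<Rightarrow> 'a \<Rightarrow> nat" where
  "common_nbrs V E u v = card {w \<in> V. E u w \<and> E v w}"

definition deza_graph :: "'a set \<Rightarrow> ('a \<Rightarrow> 'a \<Rightarrow> bool) \<Rightarrow> nat \<Rightarrow> nat \<Rightarrow> nat \<Rightarrow> nat \<Rightarrow> bool" where
  "deza_graph V E n k b a \<longleftrightarrow>
     finite V \<and> card V = n \<and>
     (\<forall>x\<in>V. \<forall>y\<in>V. E x y \<longrightarrow> E y x) \<and>
     (\<forall>x\<in>V. \<not> E x x) \<and>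
     (\<forall>x\<in>V. card {y \<in> V. E x y} = k) \<and>
     a \<le> b \<and>
     (\<forall>u\<in>V. \<forall>v\<in>V. u \<noteq> v \<longrightarrow> common_nbrs V E u v = a \<or> common_nbrs V E u v = b)"

definition deza_beta :: "'a set \<Rightarrow> ('a \<Rightarrow> 'a \<Rightarrow> bool) \<Rightarrow> nat \<Rightarrow> 'a \<Rightarrow> nat" where
  "deza_beta V E b v = card {u \<in> V. u \<noteq> v \<and> common_nbrs V E u v = b}"

text \<open>x_b: the unique vertex having b common neighbours with x (meaningful when beta = 1).\<close>
definition vb :: "'a set \<Rightarrow> ('a \<Rightarrow> 'a \<Rightarrow> bool) \<Rightarrow> nat \<Rightarrow> 'a \<Rightarrow> 'a" where
  "vb V E b x = (THE y. y \<in> V \<and> y \<noteq> x \<and> common_nbrs V E x y = b)"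

definition A_vertex :: "'a set \<Rightarrow> ('a \<Rightarrow> 'a \<Rightarrow> bool) \<Rightarrow> nat \<Rightarrow> 'a \<Rightarrow> bool" where
  "A_vertex V E b x \<longleftrightarrow> E x (vb V E b x)"

definition NA_vertex :: "'a set \<Rightarrow> ('a \<Rightarrow> 'a \<Rightarrow> bool) \<Rightarrow> nat \<Rightarrow> 'a \<Rightarrow> bool" where
  "NA_vertex V E b x \<longleftrightarrow> \<not> E x (vb V E b x)"

definition vprime :: "'a set \<Rightarrow> ('a \<Rightarrow> 'a \<Rightarrow> bool) \<Rightarrow> nat \<Rightarrow> 'a \<Rightarrow> 'a" where
  "vprime V E b x = (THE y. y \<in> V \<and> E x y \<and> \<not> E y (vb V E b x))"

definition Cset :: "'a set \<Rightarrow> ('a \<Rightarrow> 'a \<Rightarrow> bool) \<Rightarrow> nat \<Rightarrow> 'a \<Rightarrow> 'a set" where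
  "Cset V E b x = {x, vprime V E b x, vb V E b x, vb V E b (vprime V E b x)}"

end

theory Submission
  imports Defs
begin

text \<open>
  Every vertex other than \<open>x\<close> and \<open>x\<^sub>b\<close> has exactly \<open>a\<close> common neighbours with
  both of them, while \<open>N(x)\<close> and \<open>N(x\<^sub>b)\<close> differ only in \<open>x'\<close> and \<open>(x\<^sub>b)'\<close>. Hence
  \<open>x'\<close> and \<open>(x\<^sub>b)'\<close> have the same neighbours outside \<open>{x, x\<^sub>b}\<close>, which for an
  NA-vertex forces \<open>(x')\<^sub>b = (x\<^sub>b)'\<close> and \<open>x'' = x\<close>; so the sets \<open>C(x)\<close> partition the
  NA-vertices. For NA-vertices \<open>x, y\<close> the map \<open>w \<mapsto> w\<^sub>b\<close> is a fixed-point-free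
  involution of \<open>N(x) \<inter> N(y) - {x', y'}\<close>. Taking \<open>y = x'\<close> shows that \<open>a\<close> is even; if
  \<open>C(x) \<noteq> C(y)\<close> then \<open>|N(x) \<inter> N(y)| = a\<close>, so \<open>x'\<close> and \<open>y'\<close> lie in \<open>N(x) \<inter> N(y)\<close>
  together or not at all, which is (1). Part (2) is (1) for \<open>x\<close> and \<open>y'\<close>.
\<close>

lemma even_card_if_fixpoint_free_involution:
  assumes "finite A"
    and "\<And>w. w \<in> A \<Longrightarrow> f w \<in> A" "\<And>w. w \<in> A \<Longrightarrow> f w \<noteq> w" "\<And>w. w \<in> A \<Longrightarrow> f (f w) = w"
  shows "even (card A)"
  using assms
proof (induction "card A" arbitrary: A rule: less_induct)
  case less
  show ?case
  proof (cases "A = {}")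
    case False
    then obtain w where w: "w \<in> A" by blast
    define B where "B = A - {w, f w}"
    have pair: "{w, f w} \<subseteq> A" "card {w, f w} = 2"
      using less.prems(2,3)[OF w] w by auto
    have card_A: "card A = card B + 2"
      using card_Diff_subset[OF _ pair(1)] card_mono[OF less.prems(1) pair(1)] pair(2)
      unfolding B_def by simp
    have "even (card B)"
    proof (rule less.hyps)
      show "card B < card A" using card_A by simp
      show "finite B" using less.prems(1) unfolding B_def by simp
      fix v assume "v \<in> B"
      then have v: "v \<in> A" "v \<noteq> w" "v \<noteq> f w" unfolding B_def by auto
      have "f (f v) = v" "f (f w) = w" using less.prems(4) v(1) w by auto
      then show "f v \<in> B" "f v \<noteq> v" "f (f v) = v"
        using less.prems(2,3) v unfolding B_def by auto
    qed
    then show ?thesis using card_A by simp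
  qed simp
qed

locale deza_graph_beta1 =
  fixes V :: "'a set" and E :: "'a \<Rightarrow> 'a \<Rightarrow> bool" and n k b a :: nat
  assumes deza: "deza_graph V E n k b a"
    and k_eq: "k = b + 1"
    and beta_1: "\<forall>v\<in>V. deza_beta V E b v = 1"
begin

definition N :: "'a \<Rightarrow> 'a set" where
  "N u = {w \<in> V. E u w}"

abbreviation twin :: "'a \<Rightarrow> 'a" where
  "twin u \<equiv> vb V E b u"

abbreviation mate :: "'a \<Rightarrow> 'a" where
  "mate u \<equiv> vprime V E b u"

abbreviation NA :: "'a \<Rightarrow> bool" where
  "NA u \<equiv> NA_vertex V E b u"

abbreviation C :: "'a \<Rightarrow> 'a set" where
  "C u \<equiv> Cset V E b u"

lemma finite_V: "finite V"
  using deza unfolding deza_graph_def by blast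

lemma adj_commute: "u \<in> V \<Longrightarrow> v \<in> V \<Longrightarrow> E u v \<longleftrightarrow> E v u"
  using deza unfolding deza_graph_def by blast

lemma not_adj_self: "u \<in> V \<Longrightarrow> \<not> E u u"
  using deza unfolding deza_graph_def by blast

lemma card_N: "u \<in> V \<Longrightarrow> card (N u) = k"
  using deza unfolding deza_graph_def N_def by blast

lemma finite_N: "finite (N u)"
  using finite_V unfolding N_def by simp

lemma mem_N_iff: "w \<in> N u \<longleftrightarrow> w \<in> V \<and> E u w"
  unfolding N_def by simp

lemma common_nbrs_cases:
  "u \<in> V \<Longrightarrow> v \<in> V \<Longrightarrow> u \<noteq> v \<Longrightarrow> common_nbrs V E u v = a \<or> common_nbrs V E u v = b"
  using deza unfolding deza_graph_def by simp

lemma common_nbrs_eq_card_Int: "common_nbrs V E u v = card (N u \<inter> N v)"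
  unfolding common_nbrs_def N_def by (rule arg_cong[where f = card]) auto

lemma common_nbrs_commute: "common_nbrs V E u v = common_nbrs V E v u"
  unfolding common_nbrs_eq_card_Int by (simp add: Int_commute)

lemma twin_unique:
  assumes x: "x \<in> V"
  shows "y \<in> V \<and> y \<noteq> x \<and> card (N x \<inter> N y) = b \<longleftrightarrow> y = twin x"
proof -
  have "card {u \<in> V. u \<noteq> x \<and> common_nbrs V E u x = b} = 1"
    using beta_1 x unfolding deza_beta_def by blast
  then obtain z where z: "{u \<in> V. u \<noteq> x \<and> common_nbrs V E u x = b} = {z}"
    by (rule card_1_singletonE)
  have z_iff: "y \<in> V \<and> y \<noteq> x \<and> common_nbrs V E x y = b \<longleftrightarrow> y = z" for y
    using z common_nbrs_commute[of x y] by (simp add: set_eq_iff)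
  then have "twin x = z"
    unfolding vb_def by blast
  then show ?thesis
    using z_iff by (simp add: common_nbrs_eq_card_Int)
qed

lemma twin_in_V: "x \<in> V \<Longrightarrow> twin x \<in> V"
  and twin_neq: "x \<in> V \<Longrightarrow> twin x \<noteq> x"
  and card_N_Int_N_twin: "x \<in> V \<Longrightarrow> card (N x \<inter> N (twin x)) = b"
  using twin_unique[of x "twin x"] by simp_all

lemma twin_twin:
  assumes x: "x \<in> V"
  shows "twin (twin x) = x"
proof -
  have "card (N (twin x) \<inter> N x) = b"
    using card_N_Int_N_twin[OF x] by (simp add: Int_commute)
  then show ?thesis
    using twin_unique[OF twin_in_V[OF x], of x] twin_neq[OF x] x by simp
qed

lemma card_N_Int_N_other:
  assumes "x \<in> V" "y \<in> V" "y \<noteq> x" "y \<noteq> twin x"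
  shows "card (N x \<inter> N y) = a"
proof -
  have "common_nbrs V E x y = a \<or> common_nbrs V E x y = b"
    using common_nbrs_cases assms(1-3) by blast
  then show ?thesis
    using twin_unique[OF assms(1), of y] assms by (auto simp: common_nbrs_eq_card_Int)
qed

lemma N_Diff_N_twin:
  assumes x: "x \<in> V"
  shows "N x - N (twin x) = {mate x}"
proof -
  have "card (N x - N (twin x)) = card (N x) - card (N x \<inter> N (twin x))"
    by (simp add: card_Diff_subset_Int finite_N)
  also have "\<dots> = 1"
    using card_N card_N_Int_N_twin x k_eq by simp
  finally obtain z where z: "N x - N (twin x) = {z}"
    by (rule card_1_singletonE)
  have "y \<in> V \<and> E x y \<and> \<not> E y (twin x) \<longleftrightarrow> y \<in> N x - N (twin x)" for y
    using adj_commute[of y "twin x"] twin_in_V[OF x] by (auto simp: mem_N_iff)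
  then have "y \<in> V \<and> E x y \<and> \<not> E y (twin x) \<longleftrightarrow> y = z" for y
    using z by blast
  then have "mate x = z"
    unfolding vprime_def by simp
  then show ?thesis
    using z by simp
qed

lemma mate_in_V: "x \<in> V \<Longrightarrow> mate x \<in> V"
  and adj_mate: "x \<in> V \<Longrightarrow> E x (mate x)"
  and not_adj_twin_mate: "x \<in> V \<Longrightarrow> \<not> E (twin x) (mate x)"
  using N_Diff_N_twin[of x] by (auto simp: mem_N_iff)

lemma not_adj_mate_twin:
  assumes x: "x \<in> V"
  shows "\<not> E x (mate (twin x))"
  using not_adj_twin_mate[OF twin_in_V[OF x]] by (simp add: twin_twin[OF x])

lemma adj_mate_iff_adj_mate_twin:
  assumes x: "x \<in> V" and u: "u \<in> V" "u \<noteq> x" "u \<noteq> twin x"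
  shows "E u (mate x) \<longleftrightarrow> E u (mate (twin x))"
proof -
  define S where "S = N x \<inter> N (twin x)"
  have N_x: "N x = insert (mate x) S" "mate x \<notin> S"
    using N_Diff_N_twin[OF x] unfolding S_def by auto
  have N_twin: "N (twin x) = insert (mate (twin x)) S" "mate (twin x) \<notin> S"
    using N_Diff_N_twin[OF twin_in_V[OF x]] unfolding S_def twin_twin[OF x] by auto
  have "card (N u \<inter> N x) = a"
    using card_N_Int_N_other[OF x u] by (simp add: Int_commute)
  moreover have "card (N u \<inter> N (twin x)) = a"
    using card_N_Int_N_other[OF twin_in_V[OF x] u(1)] u twin_twin[OF x]
    by (simp add: Int_commute)
  ultimately have "mate x \<in> N u \<longleftrightarrow> mate (twin x) \<in> N u"
    using N_x N_twin finite_N[of u]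
    by (simp add: Int_insert_right card_insert_if split: if_splits)
  then show ?thesis
    using mate_in_V x twin_in_V by (simp add: mem_N_iff)
qed

lemma N_mate_Int_N_mate_twin:
  assumes x: "x \<in> V"
  shows "N (mate x) \<inter> N (mate (twin x)) = N (mate x) - {x}"
proof -
  define p q r where "p = mate x" and "q = twin x" and "r = mate (twin x)"
  have V: "p \<in> V" "q \<in> V" "r \<in> V"
    using x mate_in_V twin_in_V unfolding p_def q_def r_def by auto
  have "E p x" "\<not> E p q" "\<not> E r x"
    using adj_mate[OF x] not_adj_twin_mate[OF x] not_adj_mate_twin[OF x]
      adj_commute[OF x V(1)] adj_commute[OF V(2,1)] adj_commute[OF x V(3)]
    unfolding p_def q_def r_def by blast+
  moreover have "E p u \<longleftrightarrow> E r u" if "u \<in> V" "u \<noteq> x" "u \<noteq> q" for u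
    using adj_mate_iff_adj_mate_twin[OF x that(1)] that adj_commute[of u p] adj_commute[of u r] V
    unfolding p_def q_def r_def by simp
  ultimately have "u \<in> N p \<inter> N r \<longleftrightarrow> u \<in> N p - {x}" for u
    by (cases "u \<in> V \<and> u \<noteq> x \<and> u \<noteq> q") (auto simp: mem_N_iff)
  then show ?thesis
    unfolding p_def r_def by blast
qed

lemma mate_of_NA:
  assumes x: "x \<in> V" and NA_x: "NA x"
  shows "twin (mate x) = mate (twin x)" "mate (mate x) = x" "NA (mate x)"
proof -
  define p r where "p = mate x" and "r = mate (twin x)"
  have V: "p \<in> V" "r \<in> V"
    using x mate_in_V twin_in_V unfolding p_def r_def by auto
  have Int_eq: "N p \<inter> N r = N p - {x}"
    using N_mate_Int_N_mate_twin[OF x] unfolding p_def r_def .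
  have x_N_p: "x \<in> N p"
    using adj_mate[OF x] adj_commute[OF x V(1)] V(1) x unfolding p_def by (simp add: mem_N_iff)
  have "E (twin x) r" "\<not> E (twin x) x"
    using adj_mate[OF twin_in_V[OF x]] NA_x adj_commute[OF x twin_in_V[OF x]]
    unfolding r_def NA_vertex_def by auto
  then have r_neq: "r \<noteq> x" "r \<noteq> p"
    using adj_mate[OF x] not_adj_mate_twin[OF x] unfolding p_def r_def by auto
  have "card (N p \<inter> N r) = b"
    unfolding Int_eq using x_N_p card_N[OF V(1)] finite_N k_eq by simp
  then have twin_p: "twin p = r"
    using twin_unique[OF V(1), of r] V r_neq by simp
  then have "N p - N (twin p) = {x}"
    using Int_eq x_N_p by blast
  then show "mate (mate x) = x"
    using N_Diff_N_twin[OF V(1)] unfolding p_def by simp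
  have "\<not> E p r"
  proof
    assume "E p r"
    then have "r \<in> N p - {x}"
      using V(2) r_neq(1) by (simp add: mem_N_iff)
    then have "r \<in> N r"
      using Int_eq by blast
    then show False
      using not_adj_self[OF V(2)] by (simp add: mem_N_iff)
  qed
  then show "twin (mate x) = mate (twin x)" "NA (mate x)"
    using twin_p unfolding p_def r_def NA_vertex_def by simp_all
qed

lemma NA_twin:
  assumes x: "x \<in> V" and NA_x: "NA x"
  shows "NA (twin x)"
  using NA_x adj_commute[OF x twin_in_V[OF x]] unfolding NA_vertex_def twin_twin[OF x] by simp

lemma Cset_mate:
  assumes x: "x \<in> V" and NA_x: "NA x"
  shows "C (mate x) = C x"
  unfolding Cset_def mate_of_NA[OF x NA_x] by auto

lemma Cset_twin:
  assumes x: "x \<in> V" and NA_x: "NA x"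
  shows "C (twin x) = C x"
  using mate_of_NA[OF twin_in_V[OF x] NA_twin[OF x NA_x]]
  unfolding Cset_def twin_twin[OF x] mate_of_NA(1)[OF x NA_x] by auto

lemma Cset_eq_if_mem:
  assumes x: "x \<in> V" and NA_x: "NA x" and z: "z \<in> C x"
  shows "C z = C x"
proof -
  have "z = x \<or> z = mate x \<or> z = twin x \<or> z = mate (twin x)"
    using z unfolding Cset_def mate_of_NA[OF x NA_x] by blast
  then show ?thesis
    using Cset_mate[OF x NA_x] Cset_twin[OF x NA_x]
      Cset_mate[OF twin_in_V[OF x] NA_twin[OF x NA_x]] by auto
qed

lemma Cset_disjoint:
  assumes "x \<in> V" "NA x" "y \<in> V" "NA y" "C x \<noteq> C y"
  shows "C x \<inter> C y = {}"
  using Cset_eq_if_mem assms by blast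

lemma adj_twin_if_adj:
  assumes u: "u \<in> V" "NA u" and w: "w \<in> V" "E u w" "w \<noteq> mate u"
  shows "E u (twin w)"
proof (rule ccontr)
  assume "\<not> E u (twin w)"
  then have "u \<in> N w - N (twin w)"
    using adj_commute[OF u(1) w(1)] adj_commute[OF u(1) twin_in_V[OF w(1)]] u w twin_in_V
    by (auto simp: mem_N_iff)
  then have u_mate: "u = mate w"
    using N_Diff_N_twin[OF w(1)] by blast
  show False
  proof (cases "NA w")
    case True
    then show False
      using mate_of_NA(2)[OF w(1) True] u_mate w(3) by simp
  next
    case False
    then have "twin w \<in> N w - N (twin w)"
      using twin_in_V[OF w(1)] not_adj_self by (auto simp: mem_N_iff NA_vertex_def)
    then have "twin u = w"
      using N_Diff_N_twin[OF w(1)] u_mate twin_twin[OF w(1)] by auto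
    then show False
      using u w(2) unfolding NA_vertex_def by simp
  qed
qed

lemma twin_mem_common_nbrs_Diff_mates:
  assumes x: "x \<in> V" "NA x" and y: "y \<in> V" "NA y"
    and w: "w \<in> N x \<inter> N y - {mate x, mate y}"
  shows "twin w \<in> N x \<inter> N y - {mate x, mate y}"
proof -
  have w_V: "w \<in> V"
    using w by (simp add: mem_N_iff)
  have "twin w \<noteq> mate u" if u: "u \<in> V" "NA u" "E u w" for u
  proof
    assume "twin w = mate u"
    then have "w = mate (twin u)"
      using twin_twin[OF w_V] mate_of_NA(1)[OF u(1,2)] by metis
    then show False
      using not_adj_mate_twin[OF u(1)] u(3) by simp
  qed
  moreover have "E x w" "E y w" "w \<noteq> mate x" "w \<noteq> mate y"
    using w by (auto simp: mem_N_iff)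
  ultimately show ?thesis
    using adj_twin_if_adj[OF x w_V] adj_twin_if_adj[OF y w_V] twin_in_V[OF w_V] x y
    by (auto simp: mem_N_iff)
qed

lemma even_card_common_nbrs_Diff_mates:
  assumes "x \<in> V" "NA x" "y \<in> V" "NA y"
  shows "even (card (N x \<inter> N y - {mate x, mate y}))"
proof (rule even_card_if_fixpoint_free_involution[where f = twin])
  fix w assume w: "w \<in> N x \<inter> N y - {mate x, mate y}"
  then have "w \<in> V"
    by (simp add: mem_N_iff)
  then show "twin w \<in> N x \<inter> N y - {mate x, mate y}" "twin w \<noteq> w" "twin (twin w) = w"
    using twin_mem_common_nbrs_Diff_mates[OF assms w] twin_neq twin_twin by auto
qed (simp add: finite_N)

lemma even_a:
  assumes x: "x \<in> V" and NA_x: "NA x"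
  shows "even a"
proof -
  have p: "mate x \<in> V" "NA (mate x)" "E x (mate x)"
    using mate_in_V[OF x] mate_of_NA(3)[OF x NA_x] adj_mate[OF x] .
  have "mate x \<noteq> x" "mate x \<noteq> twin x"
    using p(3) not_adj_self[OF x] NA_x unfolding NA_vertex_def by auto
  then have "card (N x \<inter> N (mate x)) = a"
    using card_N_Int_N_other[OF x p(1)] by simp
  moreover have "N x \<inter> N (mate x) - {mate x, mate (mate x)} = N x \<inter> N (mate x)"
    using not_adj_self x p(1) mate_of_NA(2)[OF x NA_x] by (auto simp: mem_N_iff)
  ultimately show ?thesis
    using even_card_common_nbrs_Diff_mates[OF x NA_x p(1,2)] by simp
qed

lemma adj_mate_iff_adj_mate:
  assumes x: "x \<in> V" "NA x" and y: "y \<in> V" "NA y" and C_neq: "C x \<noteq> C y"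
  shows "E (mate x) y \<longleftrightarrow> E x (mate y)"
proof -
  define I where "I = N x \<inter> N y"
  have "C x \<inter> C y = {}"
    using Cset_disjoint[OF x y C_neq] .
  then have "y \<noteq> x" "y \<noteq> twin x" "mate x \<noteq> mate y"
    unfolding Cset_def by auto
  then have "a = card (I \<inter> {mate x, mate y}) + card (I - {mate x, mate y})"
    using card_N_Int_N_other[OF x(1) y(1)] card_Int_Diff[of I] finite_N
    unfolding I_def by simp
  also have "card (I \<inter> {mate x, mate y}) = of_bool (mate x \<in> I) + of_bool (mate y \<in> I)"
    using \<open>mate x \<noteq> mate y\<close> by (simp add: Int_insert_right)
  finally have "even (of_bool (mate x \<in> I) + of_bool (mate y \<in> I) :: nat)"
    using even_a[OF x] even_card_common_nbrs_Diff_mates[OF x y] unfolding I_def by simp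
  moreover have "mate x \<in> I \<longleftrightarrow> E (mate x) y" "mate y \<in> I \<longleftrightarrow> E x (mate y)"
    using mate_in_V adj_mate adj_commute[OF mate_in_V[OF x(1)] y(1)] x(1) y(1)
    unfolding I_def by (auto simp: mem_N_iff)
  ultimately show ?thesis
    by auto
qed

end

theorem lemma16:
  fixes V :: "'a set" and E :: "'a \<Rightarrow> 'a \<Rightarrow> bool" and n k a :: nat and x y :: 'a
  assumes "deza_graph V E n k (k - 1) a"
    and "k > 1"
    and "\<forall>v\<in>V. deza_beta V E (k - 1) v = 1"
    and "x \<in> V" and "y \<in> V"
    and "NA_vertex V E (k - 1) x" and "NA_vertex V E (k - 1) y"
    and "Cset V E (k - 1) x \<noteq> Cset V E (k - 1) y"
  shows "(E (vprime V E (k - 1) x) y \<longleftrightarrow> E x (vprime V E (k - 1) y))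
       \<and> (E x y \<longleftrightarrow> E (vprime V E (k - 1) x) (vprime V E (k - 1) y))"
proof -
  interpret deza_graph_beta1 V E n k "k - 1" a
    using assms(1-3) by unfold_locales simp_all
  note x = assms(4,6) and y = assms(5,7)
  have mate_y: "mate y \<in> V" "NA (mate y)" "C (mate y) \<noteq> C x"
    using mate_in_V[OF y(1)] mate_of_NA(3)[OF y] Cset_mate[OF y] assms(8) by auto
  show ?thesis
    using adj_mate_iff_adj_mate[OF x y assms(8)] adj_mate_iff_adj_mate[OF x mate_y(1,2)] mate_y(3)
      mate_of_NA(2)[OF y] by auto
qed

end
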